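(* Let $\mathcal G$ be the planar Galilean conformal algebra with basis $\{L_n,H_n,I_n,J_n: n\in\mathbb Z\}$ and brackets $[L_n,L_m]=(m-n)L_{m+n}$, $[L_n,H_m]=mH_{m+n}$, $[L_n,I_m]=(m-n)I_{m+n}$, $[L_n,J_m]=(m-n)J_{m+n}$, $[H_n,I_m]=I_{m+n}$, $[H_n,J_m]=-J_{m+n}$, $[H_n,H_m]=[I_n,I_m]=[J_n,J_m]=[I_n,J_m]=0$. Let $\mathfrak p=\mathrm{Span}\{H_n,I_n,J_n: n\in\mathbb Z\}$, and let $\phi:\mathfrak p\to\mathbb C$ be a Lie algebra homomorphism such that $S^\phi=\{n\in\mathbb Z:\phi(H_n)\neq0\}$ is finite. Then $W(\phi)$ is irreducible if and only if $|S^\phi|\ge 2$.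
   Context: A Lie algebra homomorphism $\phi:\mathfrak p\to\mathbb C$ is a linear map vanishing on $[\mathfrak p,\mathfrak p]=\mathrm{Span}\{I_n,J_n\}$. $W(\phi)=\mathcal U(\mathcal G)\otimes_{\mathcal U(\mathfrak p)}\mathbb C w_\phi$, where $\mathbb C w_\phi$ is the one-dimensional $\mathfrak p$-module with $pw_\phi=\phi(p)w_\phi$. *)

theory Defs
  imports Complex_Main "HOL-Library.Poly_Mapping"
begin

datatype gb = L int | H int | I int | J int

text \<open>The Lie algebra G itself: finitely supported complex combinations of basis elements.\<close>
type_synonym gca = "gb \<Rightarrow>\<^sub>0 complex"

definition bvec :: "complex \<Rightarrow> gb \<Rightarrow> gca" where
  "bvec c b = Poly_Mapping.single b c"

fun br :: "gb \<Rightarrow> gb \<Rightarrow> gca" where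
  "br (L n) (L m) = bvec (of_int (m - n)) (L (m + n))"
| "br (L n) (H m) = bvec (of_int m) (H (m + n))"
| "br (H m) (L n) = bvec (- of_int m) (H (m + n))"
| "br (L n) (I m) = bvec (of_int (m - n)) (I (m + n))"
| "br (I m) (L n) = bvec (- of_int (m - n)) (I (m + n))"
| "br (L n) (J m) = bvec (of_int (m - n)) (J (m + n))"
| "br (J m) (L n) = bvec (- of_int (m - n)) (J (m + n))"
| "br (H n) (I m) = bvec 1 (I (m + n))"
| "br (I m) (H n) = bvec (- 1) (I (m + n))"
| "br (H n) (J m) = bvec (- 1) (J (m + n))"
| "br (J m) (H n) = bvec 1 (J (m + n))"
| "br (H n) (H m) = 0"
| "br (I n) (I m) = 0"
| "br (J n) (J m) = 0"
| "br (I n) (J m) = 0"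
| "br (J m) (I n) = 0"

fun in_p :: "gb \<Rightarrow> bool" where
  "in_p (L n) = False"
| "in_p (H n) = True"
| "in_p (I n) = True"
| "in_p (J n) = True"

definition lin :: "(gb \<Rightarrow> complex) \<Rightarrow> gca \<Rightarrow> complex" where
  "lin phi g = (\<Sum>k\<in>Poly_Mapping.keys g. Poly_Mapping.lookup g k * phi k)"

text \<open>A linear map phi : p -> C (given by its values on the basis H_n, I_n, J_n;
  values on L_n are irrelevant) is a Lie algebra homomorphism iff
  phi([x,y]) = 0 for all x, y in p (it suffices to check basis elements).\<close>
definition lie_hom_p :: "(gb \<Rightarrow> complex) \<Rightarrow> bool" where
  "lie_hom_p phi \<longleftrightarrow> (\<forall>x y. in_p x \<and> in_p y \<longrightarrow> lin phi (br x y) = 0)"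

definition S_phi :: "(gb \<Rightarrow> complex) \<Rightarrow> int set" where
  "S_phi phi = {n. phi (H n) \<noteq> 0}"

text \<open>Tensor algebra T(G): finitely supported complex combinations of words in the basis.\<close>
type_synonym tens = "gb list \<Rightarrow>\<^sub>0 complex"

definition wd :: "gb list \<Rightarrow> tens" where
  "wd u = Poly_Mapping.single u 1"

definition smul :: "complex \<Rightarrow> tens \<Rightarrow> tens" where
  "smul c t = Poly_Mapping.map ((*) c) t"

definition ins :: "gb list \<Rightarrow> gca \<Rightarrow> gb list \<Rightarrow> tens" where
  "ins u g v = (\<Sum>k\<in>Poly_Mapping.keys g. smul (Poly_Mapping.lookup g k) (wd (u @ [k] @ v)))"

definition act :: "gca \<Rightarrow> tens \<Rightarrow> tens" where
  "act g t = (\<Sum>k\<in>Poly_Mapping.keys t. smul (Poly_Mapping.lookup t k) (ins [] g k))"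

definition subspace_T :: "tens set \<Rightarrow> bool" where
  "subspace_T M \<longleftrightarrow> 0 \<in> M \<and> (\<forall>a\<in>M. \<forall>b\<in>M. a + b \<in> M) \<and> (\<forall>c. \<forall>a\<in>M. smul c a \<in> M)"

text \<open>Spanning set of the kernel K of T(G) -> W(phi) = U(G) (x)_{U(p)} C w_phi:
  K = two-sided ideal generated by xy - yx - [x,y]  +  left ideal generated by p - phi(p).\<close>
definition Wrels :: "(gb \<Rightarrow> complex) \<Rightarrow> tens set" where
  "Wrels phi =
     {wd (u @ [x, y] @ v) - wd (u @ [y, x] @ v) - ins u (br x y) v | u v x y. True}
   \<union> {wd (u @ [p]) - smul (phi p) (wd u) | u p. in_p p}"

definition Wker :: "(gb \<Rightarrow> complex) \<Rightarrow> tens set" where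
  "Wker phi = \<Inter> {M. subspace_T M \<and> Wrels phi \<subseteq> M}"

text \<open>W(phi) = T(G)/Wker phi with G acting by left multiplication.  G-submodules of
  W(phi) correspond exactly to subspaces M of T(G) with Wker phi \<subseteq> M that are
  stable under the action; the zero submodule is M = Wker phi and the whole module
  is M = UNIV.\<close>
definition W_irreducible :: "(gb \<Rightarrow> complex) \<Rightarrow> bool" where
  "W_irreducible phi \<longleftrightarrow>
     Wker phi \<noteq> UNIV \<and>
     (\<forall>M. subspace_T M \<and> Wker phi \<subseteq> M \<and> (\<forall>g. \<forall>t\<in>M. act g t \<in> M)
          \<longrightarrow> M = Wker phi \<or> M = UNIV)"

end

theory Submission
  imports Defs
begin

text \<open>
  Since \<open>[H\<^sub>0, I\<^sub>n] = I\<^sub>n\<close> and \<open>[H\<^sub>0, J\<^sub>n] = -J\<^sub>n\<close>, a Lie algebra homomorphism \<open>\<phi>\<close> kills all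
  \<open>I\<^sub>n, J\<^sub>n\<close>, so only the values \<open>\<phi>(H\<^sub>n)\<close> matter. Straightening as in the PBW theorem shows that
  \<open>W(\<phi>)\<close> is spanned by the images of the standard words \<open>L\<^sub>n\<^sub>1 \<dots> L\<^sub>n\<^sub>r w\<^sub>\<phi>\<close> with
  \<open>n\<^sub>1 \<le> \<dots> \<le> n\<^sub>r\<close>.

  If \<open>|S\<^sup>\<phi>| \<ge> 2\<close>, take a nonzero element of a submodule, written with standard words of degree
  at most \<open>r + 1\<close>. Translating an extreme index of the top-degree words onto an extreme point of
  \<open>S\<^sup>\<phi>\<close> gives \<open>m\<close> such that \<open>m + n \<in> S\<^sup>\<phi>\<close> for exactly one such index \<open>n = n\<^sub>0\<close>. As
  \<open>[H\<^sub>m, L\<^sub>n] = -m H\<^sub>m\<^sub>+\<^sub>n\<close>, applying \<open>H\<^sub>m - \<phi>(H\<^sub>m)\<close> deletes one letter \<open>L\<^sub>n\<^sub>0\<close> from each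
  top-degree word modulo lower degree, leaving a nonzero element of degree at most \<open>r\<close>. Descending
  to degree \<open>0\<close> puts \<open>w\<^sub>\<phi>\<close> into the submodule.

  Conversely, \<open>W(\<phi>)\<close> maps to every module with a vector on which \<open>\<pp>\<close> acts by \<open>\<phi>\<close>. Such a
  module is built on polynomials in variables \<open>Y\<^sub>i, Z\<^sub>i\<close>: \<open>H\<^sub>m\<close> acts as \<open>\<partial>/\<partial>Y\<^sub>m + \<phi>(H\<^sub>m)\<close>
  and \<open>L\<^sub>n\<close> as a Witt vector field plus multiplication by a linear form \<open>ell\<^sub>n\<close> in the \<open>Y\<^sub>i\<close>.
  Sending \<open>w\<^sub>\<phi>\<close> to \<open>1\<close> shows \<open>W(\<phi>) \<noteq> 0\<close>. If \<open>S\<^sup>\<phi> \<subseteq> {k}\<close>, then \<open>ell\<^sub>k = 0\<close>, so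
  \<open>L\<^sub>k w\<^sub>\<phi>\<close> lies in the kernel of this map, while sending \<open>w\<^sub>\<phi>\<close> to \<open>Z\<^sub>k\<^sub>+\<^sub>1\<close> shows
  \<open>L\<^sub>k w\<^sub>\<phi> \<noteq> 0\<close>: the kernel is a proper nonzero submodule.
\<close>

section \<open>The tensor algebra and the kernel of \<open>T(\<G>) \<rightarrow> W(\<phi>)\<close>\<close>

abbreviation lookup :: "('a \<Rightarrow>\<^sub>0 'b::zero) \<Rightarrow> 'a \<Rightarrow> 'b" where
  "lookup \<equiv> Poly_Mapping.lookup"

abbreviation keys :: "('a \<Rightarrow>\<^sub>0 'b::zero) \<Rightarrow> 'a set" where
  "keys \<equiv> Poly_Mapping.keys"

abbreviation single :: "'a \<Rightarrow> 'b \<Rightarrow> 'a \<Rightarrow>\<^sub>0 'b::zero" where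
  "single \<equiv> Poly_Mapping.single"

lemma sum_keys_single:
  assumes "\<And>k. h k 0 = 0"
  shows "(\<Sum>k\<in>keys (single a c). h k (lookup (single a c) k)) = h a c"
  using assms by simp

lemma sum_keys_bvec: "(\<Sum>k\<in>keys (bvec c b). h k (lookup (bvec c b) k)) = h b c" if "\<And>k. h k 0 = 0"
  unfolding bvec_def using that by (rule sum_keys_single)

lemma poly_mapping_eq_sum_single: "p = (\<Sum>k\<in>keys p. single k (lookup p k))"
  by (rule poly_mapping_eqI) (auto simp: lookup_sum lookup_single when_def in_keys_iff)

lemma lookup_smul [simp]: "lookup (smul c t) u = c * lookup t u"
  unfolding smul_def by transfer (simp add: when_def)

lemma keys_smul: "keys (smul c t) \<subseteq> keys t"
  by (auto simp: in_keys_iff)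

lemma keys_smul_nonzero: "c \<noteq> 0 \<Longrightarrow> keys (smul c t) = keys t"
  by (auto simp: in_keys_iff)

lemma smul_add_left: "smul (c + d) a = smul c a + smul d a"
  by (rule poly_mapping_eqI) (simp add: lookup_add algebra_simps)

lemma smul_diff_right: "smul c (a - b) = smul c a - smul c b"
  by (rule poly_mapping_eqI) (simp add: lookup_minus algebra_simps)

lemma smul_minus_left: "smul (- c) a = - smul c a"
  by (rule poly_mapping_eqI) simp

lemma smul_zero_left [simp]: "smul 0 a = 0"
  by (rule poly_mapping_eqI) simp

lemma smul_one [simp]: "smul 1 a = a"
  by (rule poly_mapping_eqI) simp

lemma smul_smul [simp]: "smul c (smul d a) = smul (c * d) a"
  by (rule poly_mapping_eqI) simp

lemma smul_sum_right: "smul c (sum f A) = (\<Sum>x\<in>A. smul c (f x))"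
  by (rule poly_mapping_eqI) (simp add: lookup_sum sum_distrib_left)

lemma lookup_wd [simp]: "lookup (wd w) u = (if u = w then 1 else 0)"
  by (simp add: wd_def lookup_single)

lemma tens_eq_sum_words: "t = (\<Sum>u\<in>keys t. smul (lookup t u) (wd u))"
proof -
  have "smul c (wd u) = single u c" for c u
    by (rule poly_mapping_eqI) (simp add: lookup_single)
  then show ?thesis
    by (subst poly_mapping_eq_sum_single) simp
qed

lemma ins_bvec: "ins u (bvec c b) v = smul c (wd (u @ [b] @ v))"
  unfolding ins_def by (rule sum_keys_bvec) simp

definition lmult :: "gb \<Rightarrow> tens \<Rightarrow> tens" where
  "lmult x t = act (bvec 1 x) t"

lemma lmult_eq_sum: "lmult x t = (\<Sum>u\<in>keys t. smul (lookup t u) (wd (x # u)))"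
  unfolding lmult_def act_def by (simp add: ins_bvec)

lemma lmult_zero [simp]: "lmult x 0 = 0"
  by (simp add: lmult_eq_sum)

lemma lmult_add: "lmult x (a + b) = lmult x a + lmult x b"
  unfolding lmult_eq_sum by (rule setsum_keys_plus_distrib) (auto simp: smul_add_left)

lemma lmult_smul: "lmult x (smul c a) = smul c (lmult x a)"
proof (cases "c = 0")
  case False
  then show ?thesis
    unfolding lmult_eq_sum keys_smul_nonzero[OF False] by (simp add: smul_sum_right)
qed simp

lemma lmult_diff: "lmult x (a - b) = lmult x a - lmult x b"
  by (metis add_diff_cancel lmult_add diff_add_cancel)

lemma lmult_sum: "lmult x (sum f A) = (\<Sum>i\<in>A. lmult x (f i))"
  by (induction A rule: infinite_finite_induct) (auto simp: lmult_add)

lemma lmult_wd [simp]: "lmult x (wd u) = wd (x # u)"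
  unfolding lmult_eq_sum by (simp add: wd_def)

lemma lmult_ins: "lmult x (ins u g v) = ins (x # u) g v"
  unfolding ins_def by (simp add: lmult_sum lmult_smul)

lemma act_eq_sum_lmult: "act g t = (\<Sum>k\<in>keys g. smul (lookup g k) (lmult k t))"
proof -
  have "act g t = (\<Sum>u\<in>keys t. \<Sum>k\<in>keys g. smul (lookup g k) (smul (lookup t u) (wd (k # u))))"
    unfolding act_def ins_def by (simp add: smul_sum_right mult.commute)
  also have "\<dots> = (\<Sum>k\<in>keys g. smul (lookup g k) (lmult k t))"
    by (subst sum.swap) (simp add: lmult_eq_sum smul_sum_right)
  finally show ?thesis .
qed

lemma lmult_minus_smul_eq_sum:
  "lmult x s - smul c s = (\<Sum>u\<in>keys s. smul (lookup s u) (lmult x (wd u) - smul c (wd u)))"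
proof -
  have "smul c s = smul c (\<Sum>u\<in>keys s. smul (lookup s u) (wd u))"
    by (rule arg_cong[OF tens_eq_sum_words])
  also have "\<dots> = (\<Sum>u\<in>keys s. smul (lookup s u) (smul c (wd u)))"
    by (simp add: smul_sum_right mult.commute)
  finally show ?thesis
    by (simp add: lmult_eq_sum[of x s] smul_diff_right sum_subtractf)
qed

lemma subspace_T_diff: "subspace_T M \<Longrightarrow> a \<in> M \<Longrightarrow> b \<in> M \<Longrightarrow> a - b \<in> M"
  unfolding subspace_T_def by (metis diff_conv_add_uminus smul_minus_left smul_one)

lemma subspace_T_sum: "subspace_T M \<Longrightarrow> (\<And>i. i \<in> A \<Longrightarrow> f i \<in> M) \<Longrightarrow> sum f A \<in> M"
  by (induction A rule: infinite_finite_induct) (auto simp: subspace_T_def)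

lemma subspace_T_Wker: "subspace_T (Wker phi)"
  unfolding Wker_def subspace_T_def by blast

lemma Wker_minimal: "subspace_T M \<Longrightarrow> Wrels phi \<subseteq> M \<Longrightarrow> Wker phi \<subseteq> M"
  unfolding Wker_def by blast

lemma zero_in_Wker [simp]: "0 \<in> Wker phi"
  using subspace_T_Wker unfolding subspace_T_def by blast

lemma Wker_add: "a \<in> Wker phi \<Longrightarrow> b \<in> Wker phi \<Longrightarrow> a + b \<in> Wker phi"
  using subspace_T_Wker unfolding subspace_T_def by blast

lemma Wker_smul: "a \<in> Wker phi \<Longrightarrow> smul c a \<in> Wker phi"
  using subspace_T_Wker unfolding subspace_T_def by blast

lemma commutator_in_Wker: "wd (u @ [x, y] @ v) - wd (u @ [y, x] @ v) - ins u (br x y) v \<in> Wker phi"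
  unfolding Wker_def Wrels_def by blast

lemma eigen_in_Wker: "in_p p \<Longrightarrow> wd (u @ [p]) - smul (phi p) (wd u) \<in> Wker phi"
  unfolding Wker_def Wrels_def by blast

lemma lmult_Wker: "t \<in> Wker phi \<Longrightarrow> lmult x t \<in> Wker phi"
proof -
  have "subspace_T {t. lmult x t \<in> Wker phi}"
    unfolding subspace_T_def by (auto simp: lmult_add lmult_smul intro: Wker_add Wker_smul)
  moreover have "Wrels phi \<subseteq> {t. lmult x t \<in> Wker phi}"
    unfolding Wrels_def
    using commutator_in_Wker[of "x # u" for u] eigen_in_Wker[of _ "x # u" for u]
    by (auto simp: lmult_diff lmult_ins lmult_smul)
  ultimately show "t \<in> Wker phi \<Longrightarrow> lmult x t \<in> Wker phi"
    using Wker_minimal by blast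
qed

section \<open>Straightening into standard words\<close>

fun out_of_order :: "gb \<Rightarrow> gb \<Rightarrow> bool" where
  "out_of_order (L a) (L b) \<longleftrightarrow> b < a"
| "out_of_order (L a) y \<longleftrightarrow> False"
| "out_of_order x (L b) \<longleftrightarrow> True"
| "out_of_order x y \<longleftrightarrow> False"

lemma out_of_order_asym: "out_of_order x y \<Longrightarrow> \<not> out_of_order y x"
  by (cases x; cases y) auto

fun inversions :: "gb list \<Rightarrow> nat" where
  "inversions [] = 0"
| "inversions (x # u) = length (filter (out_of_order x) u) + inversions u"

lemma inversions_swap:
  "out_of_order x y \<Longrightarrow> inversions (a @ [y, x] @ b) < inversions (a @ [x, y] @ b)"
  by (induction a) (auto dest: out_of_order_asym)

definition standard_word :: "gb list \<Rightarrow> bool" where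
  "standard_word u \<longleftrightarrow> (\<exists>ns. sorted ns \<and> u = map L ns)"

definition standard_span :: "int \<Rightarrow> tens set" where
  "standard_span d = {s. \<forall>u\<in>keys s. standard_word u \<and> int (length u) \<le> d}"

text \<open>The preimage of the \<open>d\<close>-th PBW filtration piece of \<open>W(\<phi>)\<close>.\<close>

definition PBW_filt :: "(gb \<Rightarrow> complex) \<Rightarrow> int \<Rightarrow> tens set" where
  "PBW_filt phi d = {t. \<exists>s\<in>standard_span d. t - s \<in> Wker phi}"

lemma standard_word_wd_in_span:
  "standard_word u \<Longrightarrow> int (length u) \<le> d \<Longrightarrow> wd u \<in> standard_span d"
  by (simp add: standard_span_def wd_def)

lemma zero_in_standard_span [simp]: "0 \<in> standard_span d"
  by (simp add: standard_span_def)

lemma standard_span_add: "a \<in> standard_span d \<Longrightarrow> b \<in> standard_span d \<Longrightarrow> a + b \<in> standard_span d"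
  unfolding standard_span_def using keys_add[of a b] by blast

lemma standard_span_smul: "a \<in> standard_span d \<Longrightarrow> smul c a \<in> standard_span d"
  unfolding standard_span_def using keys_smul by blast

lemma standard_span_sum:
  "(\<And>i. i \<in> A \<Longrightarrow> f i \<in> standard_span d) \<Longrightarrow> sum f A \<in> standard_span d"
  by (induction A rule: infinite_finite_induct) (auto simp: standard_span_add)

lemma standard_span_mono: "a \<in> standard_span d \<Longrightarrow> d \<le> d' \<Longrightarrow> a \<in> standard_span d'"
  unfolding standard_span_def by force

lemma standard_span_negative: "d < 0 \<Longrightarrow> a \<in> standard_span d \<Longrightarrow> a = 0"
  unfolding standard_span_def by fastforce

lemma Wker_subset_PBW_filt: "Wker phi \<subseteq> PBW_filt phi d"
  unfolding PBW_filt_def by (auto intro!: bexI[of _ 0])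

lemma zero_in_PBW_filt [simp]: "0 \<in> PBW_filt phi d"
  using Wker_subset_PBW_filt zero_in_Wker by blast

lemma standard_span_subset_PBW_filt: "standard_span d \<subseteq> PBW_filt phi d"
  unfolding PBW_filt_def by (auto intro!: bexI)

lemma PBW_filt_add: "a \<in> PBW_filt phi d \<Longrightarrow> b \<in> PBW_filt phi d \<Longrightarrow> a + b \<in> PBW_filt phi d"
proof -
  assume "a \<in> PBW_filt phi d" "b \<in> PBW_filt phi d"
  then obtain s s' where s: "s \<in> standard_span d" "a - s \<in> Wker phi"
    and s': "s' \<in> standard_span d" "b - s' \<in> Wker phi"
    unfolding PBW_filt_def by blast
  then have "(a + b) - (s + s') \<in> Wker phi"
    by (metis Wker_add add_diff_add)
  with s s' show ?thesis
    unfolding PBW_filt_def by (blast intro: standard_span_add)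
qed

lemma PBW_filt_smul: "a \<in> PBW_filt phi d \<Longrightarrow> smul c a \<in> PBW_filt phi d"
proof -
  assume "a \<in> PBW_filt phi d"
  then obtain s where s: "s \<in> standard_span d" "a - s \<in> Wker phi"
    unfolding PBW_filt_def by blast
  then have "smul c a - smul c s \<in> Wker phi"
    by (metis Wker_smul smul_diff_right)
  with s show ?thesis
    unfolding PBW_filt_def by (blast intro: standard_span_smul)
qed

lemma PBW_filt_diff: "a \<in> PBW_filt phi d \<Longrightarrow> b \<in> PBW_filt phi d \<Longrightarrow> a - b \<in> PBW_filt phi d"
  by (metis PBW_filt_add PBW_filt_smul diff_conv_add_uminus smul_minus_left smul_one)

lemma PBW_filt_sum: "(\<And>i. i \<in> A \<Longrightarrow> f i \<in> PBW_filt phi d) \<Longrightarrow> sum f A \<in> PBW_filt phi d"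
  by (induction A rule: infinite_finite_induct) (auto simp: PBW_filt_add)

lemma PBW_filt_mono: "a \<in> PBW_filt phi d \<Longrightarrow> d \<le> d' \<Longrightarrow> a \<in> PBW_filt phi d'"
  unfolding PBW_filt_def using standard_span_mono by blast

lemma PBW_filt_cong: "a \<in> PBW_filt phi d \<Longrightarrow> b - a \<in> Wker phi \<Longrightarrow> b \<in> PBW_filt phi d"
  by (metis PBW_filt_add Wker_subset_PBW_filt diff_add_cancel subsetD)

lemma no_inversion_standard_word:
  assumes "\<nexists>a x y b. u = a @ [x, y] @ b \<and> out_of_order x y"
    and "\<nexists>w p. u = w @ [p] \<and> in_p p"
  shows "standard_word u"
  using assms
proof (induction u)
  case Nil
  show ?case by (simp add: standard_word_def)
next
  case (Cons x u)
  have "\<nexists>a x y b. u = a @ [x, y] @ b \<and> out_of_order x y"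
    using Cons.prems(1) by (metis append_Cons)
  moreover have "\<nexists>w p. u = w @ [p] \<and> in_p p"
    using Cons.prems(2) by (metis append_Cons)
  ultimately obtain ns where ns: "sorted ns" "u = map L ns"
    using Cons.IH unfolding standard_word_def by blast
  show ?case
  proof (cases ns)
    case Nil
    with Cons.prems(2) ns obtain m where "x = L m"
      by (cases x) auto
    with Nil ns show ?thesis
      unfolding standard_word_def by (intro exI[of _ "[m]"]) simp
  next
    case (Cons n ns')
    with ns Cons.prems(1) have "\<not> out_of_order x (L n)"
      by (metis append_Cons append_Nil list.simps(9))
    then obtain m where "x = L m" "m \<le> n"
      by (cases x) auto
    with Cons ns show ?thesis
      unfolding standard_word_def by (intro exI[of _ "m # ns"]) auto
  qed
qed

lemma ins_in_PBW_filt: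
  "(\<And>k. wd (a @ [k] @ b) \<in> PBW_filt phi d) \<Longrightarrow> ins a g b \<in> PBW_filt phi d"
  unfolding ins_def by (auto intro!: PBW_filt_sum PBW_filt_smul)

text \<open>Sort by adjacent transpositions, whose commutator terms are shorter words, and absorb a trailing
  letter of \<open>\<pp>\<close> into \<open>w\<^sub>\<phi>\<close>.\<close>

lemma wd_in_PBW_filt: "wd u \<in> PBW_filt phi (int (length u))"
proof (induction u rule: wf_induct[OF wf_measures[of "[length, inversions]"]])
  case (1 u)
  have shorter: "wd w \<in> PBW_filt phi (int (length u))" if "length w < length u" for w
    using 1 that by (auto intro: PBW_filt_mono)
  consider (eigen) w p where "u = w @ [p]" "in_p p"
    | (swap) a x y b where "u = a @ [x, y] @ b" "out_of_order x y"
    | (standard) "standard_word u"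
    using no_inversion_standard_word by blast
  then show ?case
  proof cases
    case eigen
    then have "smul (phi p) (wd w) \<in> PBW_filt phi (int (length u))"
      by (intro PBW_filt_smul shorter) simp
    with eigen show ?thesis
      using eigen_in_Wker by (blast intro: PBW_filt_cong)
  next
    case swap
    define u' where "u' = a @ [y, x] @ b"
    have "(u', u) \<in> measures [length, inversions]"
      using inversions_swap[OF swap(2), of a b] by (simp add: u'_def swap)
    then have "wd u' \<in> PBW_filt phi (int (length u))"
      using 1 by (simp add: u'_def swap)
    moreover have "ins a (br x y) b \<in> PBW_filt phi (int (length u))"
      by (rule ins_in_PBW_filt[OF shorter]) (simp add: swap)
    ultimately have "wd u' + ins a (br x y) b \<in> PBW_filt phi (int (length u))"
      by (rule PBW_filt_add)
    moreover have "wd u - (wd u' + ins a (br x y) b) \<in> Wker phi"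
      using commutator_in_Wker[of a x y b phi] by (simp add: u'_def swap diff_diff_eq)
    ultimately show ?thesis
      by (rule PBW_filt_cong)
  next
    case standard
    then show ?thesis
      using standard_span_subset_PBW_filt standard_word_wd_in_span by blast
  qed
qed

lemma tens_in_PBW_filt: "\<exists>d. t \<in> PBW_filt phi d"
proof
  let ?d = "Max (insert 0 (int ` length ` keys t))"
  have "wd u \<in> PBW_filt phi ?d" if "u \<in> keys t" for u
    using that by (intro PBW_filt_mono[OF wd_in_PBW_filt]) auto
  then have "(\<Sum>u\<in>keys t. smul (lookup t u) (wd u)) \<in> PBW_filt phi ?d"
    by (auto intro!: PBW_filt_sum PBW_filt_smul)
  then show "t \<in> PBW_filt phi ?d"
    using tens_eq_sum_words[of t] by simp
qed

lemma lmult_PBW_filt: "t \<in> PBW_filt phi d \<Longrightarrow> lmult x t \<in> PBW_filt phi (d + 1)"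
proof -
  assume "t \<in> PBW_filt phi d"
  then obtain s where s: "s \<in> standard_span d" "t - s \<in> Wker phi"
    unfolding PBW_filt_def by blast
  have "wd (x # u) \<in> PBW_filt phi (d + 1)" if "u \<in> keys s" for u
    using wd_in_PBW_filt[of "x # u" phi] s(1) that
    unfolding standard_span_def by (force intro: PBW_filt_mono)
  then have "lmult x s \<in> PBW_filt phi (d + 1)"
    unfolding lmult_eq_sum by (auto intro!: PBW_filt_sum PBW_filt_smul)
  moreover have "lmult x t - lmult x s \<in> Wker phi"
    using lmult_Wker[OF s(2)] by (simp add: lmult_diff)
  ultimately show ?thesis by (rule PBW_filt_cong)
qed

section \<open>The action of \<open>H\<^sub>m\<close> on standard words\<close>

text \<open>Since \<open>[H\<^sub>m, L\<^sub>n] = -m H\<^sub>m\<^sub>+\<^sub>n\<close> and \<open>H\<^sub>m\<^sub>+\<^sub>n\<close> acts on the rest of a standard word by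
  \<open>\<phi>(H\<^sub>m\<^sub>+\<^sub>n)\<close> up to lower terms, \<open>H_drop \<phi> m u\<close> is the part of degree \<open>|u| - 1\<close> of
  \<open>(H\<^sub>m - \<phi>(H\<^sub>m)) u w\<^sub>\<phi>\<close>.\<close>

fun H_drop :: "(gb \<Rightarrow> complex) \<Rightarrow> int \<Rightarrow> gb list \<Rightarrow> tens" where
  "H_drop phi m (L n # u) = smul (- of_int m * phi (H (m + n))) (wd u) + lmult (L n) (H_drop phi m u)"
| "H_drop phi m _ = 0"

lemma H_drop_in_PBW_filt: "H_drop phi m u \<in> PBW_filt phi (int (length u) - 1)"
proof (induction phi m u rule: H_drop.induct)
  case (1 phi m n u)
  have "smul (- of_int m * phi (H (m + n))) (wd u) \<in> PBW_filt phi (int (length (L n # u)) - 1)"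
    by (simp add: PBW_filt_smul wd_in_PBW_filt)
  moreover have "lmult (L n) (H_drop phi m u) \<in> PBW_filt phi (int (length (L n # u)) - 1)"
    using lmult_PBW_filt[OF "1"] by simp
  ultimately show ?case
    by (simp add: PBW_filt_add)
qed simp_all

lemma H_action_standard_word:
  "lmult (H m) (wd (map L ns)) - smul (phi (H m)) (wd (map L ns)) - H_drop phi m (map L ns)
     \<in> PBW_filt phi (int (length ns) - 2)"
proof (induction ns arbitrary: m)
  case Nil
  show ?case
    using eigen_in_Wker[of "H m" "[]" phi] Wker_subset_PBW_filt by auto
next
  case (Cons n ns)
  let ?v = "wd (map L ns)" and ?d = "int (length (n # ns)) - 2"
  define e where "e = lmult (H m) ?v - smul (phi (H m)) ?v - H_drop phi m (map L ns)"
  have "lmult (L n) e \<in> PBW_filt phi ?d"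
    using lmult_PBW_filt[OF Cons.IH[of m]] by (simp add: e_def)
  \<comment> \<open>The induction hypothesis, taken for all \<open>m\<close>, also disposes of the \<open>H\<^sub>m\<^sub>+\<^sub>n\<close>
    created by \<open>[H\<^sub>m, L\<^sub>n]\<close>.\<close>
  moreover have "lmult (H j) ?v - smul (phi (H j)) ?v \<in> PBW_filt phi ?d" for j
  proof -
    have "lmult (H j) ?v - smul (phi (H j)) ?v - H_drop phi j (map L ns) \<in> PBW_filt phi ?d"
      using Cons.IH[of j] by (rule PBW_filt_mono) simp
    moreover have "H_drop phi j (map L ns) \<in> PBW_filt phi ?d"
      using H_drop_in_PBW_filt by (rule PBW_filt_mono) simp
    ultimately show ?thesis
      using PBW_filt_add by fastforce
  qed
  moreover have "lmult (H m) (wd (map L (n # ns))) - lmult (L n) (lmult (H m) ?v)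
      + smul (of_int m) (lmult (H (m + n)) ?v) \<in> Wker phi"
    using commutator_in_Wker[of "[]" "H m" "L n" "map L ns" phi]
    by (simp add: ins_bvec smul_minus_left)
  ultimately have "lmult (L n) e - smul (of_int m) (lmult (H (m + n)) ?v - smul (phi (H (m + n))) ?v)
      + (lmult (H m) (wd (map L (n # ns))) - lmult (L n) (lmult (H m) ?v)
         + smul (of_int m) (lmult (H (m + n)) ?v)) \<in> PBW_filt phi ?d"
    using Wker_subset_PBW_filt by (blast intro: PBW_filt_add PBW_filt_diff PBW_filt_smul)
  then show ?case
    by (simp add: e_def lmult_add lmult_diff lmult_smul smul_diff_right smul_minus_left algebra_simps)
qed

lemma remove1_map_L [simp]: "remove1 (L n) (map L ns) = map L (remove1 n ns)"
  by (induction ns) auto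

lemma count_list_map_L [simp]: "count_list (map L ns) (L n) = count_list ns n"
  by (induction ns) auto

lemma sorted_Cons_remove1: "sorted (n # ns) \<Longrightarrow> n \<in> set ns \<Longrightarrow> n # remove1 n ns = ns"
  by (cases ns) auto

lemma H_drop_standard_word_single_index:
  assumes "standard_word u" and "\<And>n. L n \<in> set u \<Longrightarrow> n \<noteq> n0 \<Longrightarrow> phi (H (m + n)) = 0"
  shows "H_drop phi m u
    = smul (of_nat (count_list u (L n0)) * (- of_int m * phi (H (m + n0)))) (wd (remove1 (L n0) u))"
proof -
  obtain ns where "sorted ns" "u = map L ns"
    using assms(1) unfolding standard_word_def by blast
  then show ?thesis
    using assms(2)
  proof (induction ns arbitrary: u)
    case (Cons n ns)
    show ?case
    proof (cases "n = n0")
      case True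
      show ?thesis
      proof (cases "n0 \<in> set ns")
        case True
        with Cons.prems(1) \<open>n = n0\<close> have "L n0 # map L (remove1 n0 ns) = map L ns"
          by (metis list.simps(9) sorted_Cons_remove1)
        then show ?thesis
          using Cons \<open>n = n0\<close>
          by (intro poly_mapping_eqI) (simp add: lmult_smul lookup_add algebra_simps)
      next
        case False
        then show ?thesis
          using Cons \<open>n = n0\<close> by (simp add: count_list_0_iff lmult_smul)
      qed
    next
      case False
      then show ?thesis
        using Cons by (simp add: lmult_smul)
    qed
  qed simp
qed

lemma H_action_standard_span:
  assumes "s \<in> standard_span (int r + 1)"
  shows "lmult (H m) s - smul (phi (H m)) s
      - (\<Sum>u\<in>{u \<in> keys s. length u = r + 1}. smul (lookup s u) (H_drop phi m u))
    \<in> PBW_filt phi (int r - 1)"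
proof -
  let ?T = "{u \<in> keys s. length u = r + 1}"
  let ?Y = "\<lambda>u. lmult (H m) (wd u) - smul (phi (H m)) (wd u)"
  have std: "standard_word u" "length u \<le> r + 1" if "u \<in> keys s" for u
    using assms that unfolding standard_span_def by auto
  have top: "?Y u - H_drop phi m u \<in> PBW_filt phi (int r - 1)" if u: "u \<in> keys s" for u
  proof -
    obtain ns where ns: "u = map L ns" "length ns \<le> r + 1"
      using std[OF u] unfolding standard_word_def by auto
    have "?Y (map L ns) - H_drop phi m (map L ns) \<in> PBW_filt phi (int r - 1)"
      by (rule PBW_filt_mono[OF H_action_standard_word]) (use ns(2) in simp)
    with ns(1) show ?thesis
      by simp
  qed
  have low: "?Y u \<in> PBW_filt phi (int r - 1)" if "u \<in> keys s - ?T" for u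
  proof -
    have "H_drop phi m u \<in> PBW_filt phi (int r - 1)"
      by (rule PBW_filt_mono[OF H_drop_in_PBW_filt]) (use std(2)[of u] that in auto)
    then have "(?Y u - H_drop phi m u) + H_drop phi m u \<in> PBW_filt phi (int r - 1)"
      using top[of u] that by (blast intro: PBW_filt_add)
    then show ?thesis
      by simp
  qed
  have split: "(\<Sum>u\<in>keys s. f u) = (\<Sum>u\<in>keys s - ?T. f u) + (\<Sum>u\<in>?T. f u)"
    for f :: "gb list \<Rightarrow> tens"
    by (rule sum.subset_diff) auto
  have "lmult (H m) s - smul (phi (H m)) s - (\<Sum>u\<in>?T. smul (lookup s u) (H_drop phi m u))
      = (\<Sum>u\<in>keys s - ?T. smul (lookup s u) (?Y u))
        + (\<Sum>u\<in>?T. smul (lookup s u) (?Y u - H_drop phi m u))"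
    unfolding lmult_minus_smul_eq_sum[of "H m" s] split[of "\<lambda>u. smul (lookup s u) (?Y u)"]
    by (simp add: smul_diff_right sum_subtractf)
  also have "\<dots> \<in> PBW_filt phi (int r - 1)"
    using low top by (intro PBW_filt_add PBW_filt_sum PBW_filt_smul) auto
  finally show ?thesis .
qed

lemma H_action_standard_span_isolated:
  assumes s: "s \<in> standard_span (int r + 1)"
    and iso: "\<And>u n. u \<in> keys s \<Longrightarrow> length u = r + 1 \<Longrightarrow> L n \<in> set u \<Longrightarrow> n \<noteq> n0
      \<Longrightarrow> phi (H (m + n)) = 0"
  shows "lmult (H m) s - smul (phi (H m)) s
      - (\<Sum>u\<in>{u \<in> keys s. length u = r + 1}.
          smul (lookup s u * (of_nat (count_list u (L n0)) * (- of_int m * phi (H (m + n0)))))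
            (wd (remove1 (L n0) u)))
    \<in> PBW_filt phi (int r - 1)"
proof -
  have "smul (lookup s u) (H_drop phi m u)
      = smul (lookup s u * (of_nat (count_list u (L n0)) * (- of_int m * phi (H (m + n0)))))
          (wd (remove1 (L n0) u))"
    if "u \<in> {u \<in> keys s. length u = r + 1}" for u
  proof -
    have "standard_word u"
      using s that unfolding standard_span_def by blast
    with that iso show ?thesis
      by (subst H_drop_standard_word_single_index) auto
  qed
  then have "(\<Sum>u\<in>{u \<in> keys s. length u = r + 1}. smul (lookup s u) (H_drop phi m u))
      = (\<Sum>u\<in>{u \<in> keys s. length u = r + 1}.
          smul (lookup s u * (of_nat (count_list u (L n0)) * (- of_int m * phi (H (m + n0)))))
            (wd (remove1 (L n0) u)))"
    by (rule sum.cong[OF refl])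
  with H_action_standard_span[OF s, of m phi] show ?thesis
    by simp
qed

lemma standard_word_remove1: "standard_word u \<Longrightarrow> standard_word (remove1 (L n) u)"
  unfolding standard_word_def by (auto intro: sorted_remove1)

lemma standard_word_remove1_inj:
  assumes "standard_word u" "standard_word u'" "L n \<in> set u" "L n \<in> set u'"
    and "remove1 (L n) u = remove1 (L n) u'"
  shows "u = u'"
proof -
  obtain ns ns' where ns: "sorted ns" "u = map L ns" "sorted ns'" "u' = map L ns'"
    using assms(1,2) unfolding standard_word_def by blast
  have "inj L"
    by (simp add: inj_def)
  then have "remove1 n ns = remove1 n ns'"
    using assms(5) ns by (simp add: inj_map_eq_map)
  moreover have "n \<in> set ns" "n \<in> set ns'"
    using assms(3,4) ns by auto
  ultimately have "ns = ns'"
    using ns by (metis insort_remove1)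
  with ns show ?thesis
    by simp
qed

lemma sum_remove1_in_standard_span:
  assumes "\<And>u. u \<in> T \<Longrightarrow> standard_word u \<and> length u = r + 1"
    and "\<And>u. u \<in> T \<Longrightarrow> L n \<notin> set u \<Longrightarrow> c u = 0"
  shows "(\<Sum>u\<in>T. smul (c u) (wd (remove1 (L n) u))) \<in> standard_span (int r)"
proof (rule standard_span_sum)
  fix u assume "u \<in> T"
  then show "smul (c u) (wd (remove1 (L n) u)) \<in> standard_span (int r)"
    using assms by (cases "L n \<in> set u")
      (auto intro!: standard_span_smul standard_word_wd_in_span standard_word_remove1 simp: length_remove1)
qed

lemma lookup_sum_remove1_standard:
  assumes "finite T" "\<And>u. u \<in> T \<Longrightarrow> standard_word u" "u0 \<in> T" "L n \<in> set u0"
    and "\<And>u. u \<in> T \<Longrightarrow> L n \<notin> set u \<Longrightarrow> c u = 0"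
  shows "lookup (\<Sum>u\<in>T. smul (c u) (wd (remove1 (L n) u))) (remove1 (L n) u0) = c u0"
proof -
  have "lookup (\<Sum>u\<in>T. smul (c u) (wd (remove1 (L n) u))) (remove1 (L n) u0)
      = (\<Sum>u\<in>T. if u = u0 then c u else 0)"
    unfolding lookup_sum
  proof (rule sum.cong[OF refl])
    fix u assume u: "u \<in> T"
    show "lookup (smul (c u) (wd (remove1 (L n) u))) (remove1 (L n) u0) = (if u = u0 then c u else 0)"
    proof (cases "u = u0 \<or> c u = 0")
      case False
      then have "remove1 (L n) u0 \<noteq> remove1 (L n) u"
        using standard_word_remove1_inj[of u0 u] assms u by blast
      with False show ?thesis
        by simp
    qed auto
  qed
  with assms(1,3) show ?thesis
    by simp
qed

section \<open>Irreducibility when \<open>|S\<^sup>\<phi>| \<ge> 2\<close>\<close>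

text \<open>Translate \<open>Min F\<close> onto \<open>Max S\<close>, or, if these coincide, \<open>Max F\<close> onto \<open>Min S\<close>.\<close>

lemma exists_translate_isolating:
  fixes S F :: "int set"
  assumes S: "finite S" "2 \<le> card S" and F: "finite F" "F \<noteq> {}"
  shows "\<exists>m n0. n0 \<in> F \<and> m \<noteq> 0 \<and> m + n0 \<in> S \<and> (\<forall>n\<in>F. n \<noteq> n0 \<longrightarrow> m + n \<notin> S)"
proof -
  obtain a b where "a \<in> S" "b \<in> S" "a \<noteq> b"
    using S card_le_Suc0_iff_eq[OF S(1)] by fastforce
  then have "S \<noteq> {}" and "Min S < Max S"
    using S(1) by (auto intro: le_less_trans[OF Min_le] less_le_trans[OF _ Max_ge]
      simp: neq_iff)
  show ?thesis
  proof (cases "Min F = Max S")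
    case False
    have outside: "Max S - Min F + n \<notin> S" if "n \<in> F" "n \<noteq> Min F" for n
    proof -
      have "Min F < n"
        using Min_le[OF F(1) that(1)] that(2) by simp
      then show ?thesis
        using Max_ge[OF S(1)] by fastforce
    qed
    show ?thesis
      by (rule exI[of _ "Max S - Min F"], rule exI[of _ "Min F"])
        (use False F \<open>S \<noteq> {}\<close> S(1) outside in auto)
  next
    case True
    have outside: "Min S - Max F + n \<notin> S" if "n \<in> F" "n \<noteq> Max F" for n
    proof -
      have "n < Max F"
        using Max_ge[OF F(1) that(1)] that(2) by simp
      then show ?thesis
        using Min_le[OF S(1)] by fastforce
    qed
    have "Min S < Max F"
      using True \<open>Min S < Max S\<close> Min_le[OF F(1) Max_in[OF F]] by simp
    show ?thesis
      by (rule exI[of _ "Min S - Max F"], rule exI[of _ "Max F"])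
        (use F \<open>S \<noteq> {}\<close> S(1) \<open>Min S < Max F\<close> outside in auto)
  qed
qed

lemma exists_isolating_H_index:
  assumes S: "finite (S_phi phi)" "2 \<le> card (S_phi phi)"
    and T: "finite T" "T \<noteq> {}" "\<And>u. u \<in> T \<Longrightarrow> standard_word u \<and> u \<noteq> []"
  obtains m n0 u0 where "u0 \<in> T" "L n0 \<in> set u0" "m \<noteq> 0" "phi (H (m + n0)) \<noteq> 0"
    "\<And>u n. u \<in> T \<Longrightarrow> L n \<in> set u \<Longrightarrow> n \<noteq> n0 \<Longrightarrow> phi (H (m + n)) = 0"
proof -
  define F where "F = (\<Union>u\<in>T. L -` set u)"
  have "finite F"
    unfolding F_def using T(1) by (auto intro: finite_vimageI simp: inj_def)
  moreover have "F \<noteq> {}"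
  proof -
    obtain u where "u \<in> T"
      using T(2) by blast
    with T(3) obtain n ns where "u = map L (n # ns)"
      unfolding standard_word_def by (metis list.exhaust list.simps(8))
    with \<open>u \<in> T\<close> have "n \<in> F"
      unfolding F_def by (auto intro!: bexI[of _ u])
    then show ?thesis
      by blast
  qed
  ultimately obtain m n0 where "n0 \<in> F" "m \<noteq> 0" "m + n0 \<in> S_phi phi"
    and "\<forall>n\<in>F. n \<noteq> n0 \<longrightarrow> m + n \<notin> S_phi phi"
    using exists_translate_isolating[OF S] by blast
  then show ?thesis
    using that unfolding F_def S_phi_def by blast
qed

definition W_submodule :: "(gb \<Rightarrow> complex) \<Rightarrow> tens set \<Rightarrow> bool" where
  "W_submodule phi M \<longleftrightarrow> subspace_T M \<and> Wker phi \<subseteq> M \<and> (\<forall>g. \<forall>t\<in>M. act g t \<in> M)"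

lemma W_irreducible_iff_submodules:
  "W_irreducible phi \<longleftrightarrow> Wker phi \<noteq> UNIV \<and> (\<forall>M. W_submodule phi M \<longrightarrow> M = Wker phi \<or> M = UNIV)"
  unfolding W_irreducible_def W_submodule_def by blast

lemma W_submodule_lmult: "W_submodule phi M \<Longrightarrow> t \<in> M \<Longrightarrow> lmult x t \<in> M"
  unfolding W_submodule_def lmult_def by blast

lemma W_submodule_lmult_minus_smul:
  assumes M: "W_submodule phi M" and t: "t \<in> M"
  shows "lmult x t - smul c t \<in> M"
proof -
  have sub: "subspace_T M"
    using M unfolding W_submodule_def by blast
  have "lmult x t \<in> M"
    using M t by (rule W_submodule_lmult)
  moreover have "smul c t \<in> M"
    using sub t unfolding subspace_T_def by blast
  ultimately show ?thesis
    by (rule subspace_T_diff[OF sub])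
qed

lemma W_submodule_cong:
  assumes M: "W_submodule phi M" and "t \<in> M" "t - s \<in> Wker phi"
  shows "s \<in> M"
proof -
  have "subspace_T M" "Wker phi \<subseteq> M"
    using M unfolding W_submodule_def by blast+
  then have "t - (t - s) \<in> M"
    using assms(2,3) subspace_T_diff by blast
  then show ?thesis
    by simp
qed

lemma standard_span_top_word:
  assumes "s \<in> standard_span (int r + 1)" "s \<notin> standard_span (int r)"
  shows "\<exists>u\<in>keys s. length u = r + 1"
proof -
  obtain u where u: "u \<in> keys s" "\<not> int (length u) \<le> int r"
    using assms unfolding standard_span_def by blast
  moreover have "int (length u) \<le> int r + 1"
    using assms(1) u(1) unfolding standard_span_def by blast
  ultimately have "length u = r + 1"
    by linarith
  with u(1) show ?thesis
    by blast
qed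

lemma standard_span_descent:
  assumes M: "W_submodule phi M" and S: "finite (S_phi phi)" "2 \<le> card (S_phi phi)"
    and s: "s \<in> standard_span (int r + 1)" "s \<notin> standard_span (int r)" "s \<in> M"
  shows "\<exists>s'\<in>standard_span (int r). s' \<noteq> 0 \<and> s' \<in> M"
proof -
  define T where "T = {u \<in> keys s. length u = r + 1}"
  have T: "standard_word u" "length u = r + 1" if "u \<in> T" for u
    using s(1) that unfolding T_def standard_span_def by auto
  have "T \<noteq> {}"
    using standard_span_top_word[OF s(1,2)] unfolding T_def by blast
  have "finite T"
    unfolding T_def by simp
  have std: "standard_word u \<and> u \<noteq> []" if "u \<in> T" for u
    using T[OF that] by auto
  obtain u0 n0 m where u0: "u0 \<in> T" "L n0 \<in> set u0" and m: "m \<noteq> 0" "phi (H (m + n0)) \<noteq> 0"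
    and iso: "\<And>u n. u \<in> T \<Longrightarrow> L n \<in> set u \<Longrightarrow> n \<noteq> n0 \<Longrightarrow> phi (H (m + n)) = 0"
    using exists_isolating_H_index[OF S \<open>finite T\<close> \<open>T \<noteq> {}\<close> std] by metis
  define c where
    "c u = lookup s u * (of_nat (count_list u (L n0)) * (- of_int m * phi (H (m + n0))))" for u
  define s' where "s' = (\<Sum>u\<in>T. smul (c u) (wd (remove1 (L n0) u)))"
  have c0: "c u = 0" if "L n0 \<notin> set u" for u
    using that by (simp add: c_def count_list_0_iff)
  have "lmult (H m) s - smul (phi (H m)) s - s' \<in> PBW_filt phi (int r - 1)"
    unfolding s'_def c_def T_def
    by (rule H_action_standard_span_isolated[OF s(1)]) (use iso in \<open>auto simp: T_def\<close>)
  then obtain e where e: "e \<in> standard_span (int r - 1)"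
    "lmult (H m) s - smul (phi (H m)) s - s' - e \<in> Wker phi"
    unfolding PBW_filt_def by blast
  have "lmult (H m) s - smul (phi (H m)) s - (s' + e) \<in> Wker phi"
    using e(2) by (simp only: diff_diff_eq[symmetric])
  with W_submodule_cong[OF M W_submodule_lmult_minus_smul[OF M s(3)]] have "s' + e \<in> M" .
  moreover have "s' + e \<in> standard_span (int r)"
    unfolding s'_def using T c0 e(1)
    by (intro standard_span_add sum_remove1_in_standard_span) (auto elim: standard_span_mono)
  moreover have "lookup (s' + e) (remove1 (L n0) u0) \<noteq> 0"
  proof -
    have "lookup s' (remove1 (L n0) u0) = c u0"
      unfolding s'_def using \<open>finite T\<close> T u0 c0 by (intro lookup_sum_remove1_standard) auto
    moreover have "c u0 \<noteq> 0"
      using u0 m unfolding c_def T_def by (auto simp: count_list_0_iff in_keys_iff)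
    moreover have "remove1 (L n0) u0 \<notin> keys e"
      using e(1) T[OF u0(1)] u0(2) unfolding standard_span_def by (auto simp: length_remove1)
    ultimately show ?thesis
      by (simp add: lookup_add in_keys_iff)
  qed
  ultimately show ?thesis
    by (metis lookup_zero)
qed

lemma standard_span_zero: "s \<in> standard_span 0 \<Longrightarrow> s = smul (lookup s []) (wd [])"
  by (rule poly_mapping_eqI) (auto simp: standard_span_def in_keys_iff)

lemma W_submodule_unit_if_standard:
  assumes M: "W_submodule phi M" and S: "finite (S_phi phi)" "2 \<le> card (S_phi phi)"
  shows "s \<in> standard_span (int r) \<Longrightarrow> s \<noteq> 0 \<Longrightarrow> s \<in> M \<Longrightarrow> wd [] \<in> M"
proof (induction r arbitrary: s)
  case 0
  then obtain c where "s = smul c (wd [])" "c \<noteq> 0"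
    using standard_span_zero by (metis of_nat_0 smul_zero_left)
  then have "wd [] = smul (1 / c) s"
    by simp
  also have "\<dots> \<in> M"
    using \<open>s \<in> M\<close> M unfolding W_submodule_def subspace_T_def by blast
  finally show ?case .
next
  case (Suc r)
  show ?case
  proof (cases "s \<in> standard_span (int r)")
    case False
    with Suc.prems obtain s' where "s' \<in> standard_span (int r)" "s' \<noteq> 0" "s' \<in> M"
      using standard_span_descent[OF M S, of s r] by (auto simp: add.commute)
    then show ?thesis
      by (rule Suc.IH)
  qed (use Suc in blast)
qed

lemma W_submodule_UNIV_if_unit:
  assumes M: "W_submodule phi M" and "wd [] \<in> M"
  shows "M = UNIV"
proof -
  have sub: "subspace_T M"
    using M unfolding W_submodule_def by blast
  have "wd u \<in> M" for u
    using assms W_submodule_lmult[OF M] by (induction u) (auto simp flip: lmult_wd)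
  then have "(\<Sum>u\<in>keys t. smul (lookup t u) (wd u)) \<in> M" for t
    using sub unfolding subspace_T_def by (blast intro: subspace_T_sum[OF sub])
  then show ?thesis
    using tens_eq_sum_words by auto
qed

lemma W_submodule_eq_UNIV:
  assumes M: "W_submodule phi M" and S: "finite (S_phi phi)" "2 \<le> card (S_phi phi)"
    and "M \<noteq> Wker phi"
  shows "M = UNIV"
proof -
  obtain t where "t \<in> M" "t \<notin> Wker phi"
    using M assms(4) unfolding W_submodule_def by blast
  moreover obtain d s where s: "s \<in> standard_span d" "t - s \<in> Wker phi"
    using tens_in_PBW_filt unfolding PBW_filt_def by blast
  ultimately have "s \<in> M" "s \<noteq> 0"
    using W_submodule_cong[OF M] by auto
  moreover have "0 \<le> d"
    using standard_span_negative s(1) \<open>s \<noteq> 0\<close> by force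
  ultimately have "wd [] \<in> M"
    using W_submodule_unit_if_standard[OF M S] s(1) by (metis nonneg_int_cases)
  then show ?thesis
    by (rule W_submodule_UNIV_if_unit[OF M])
qed

section \<open>Derivations of polynomial rings\<close>

type_synonym ('v, 'a) mpoly = "('v \<Rightarrow>\<^sub>0 nat) \<Rightarrow>\<^sub>0 'a"

abbreviation Const :: "'a \<Rightarrow> ('v, 'a::zero) mpoly" where
  "Const c \<equiv> single 0 c"

lemma Const_mult: "Const (a * b) = Const a * (Const b :: ('v, 'a::semiring_0) mpoly)"
  by (simp add: mult_single)

definition Var :: "'v \<Rightarrow> ('v, 'a::comm_semiring_1) mpoly" where
  "Var v = single (single v 1) 1"

lemma Var_nonzero: "Var v \<noteq> 0"
  unfolding Var_def by (metis lookup_single_eq lookup_zero one_neq_zero)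

text \<open>The truncated difference \<open>\<alpha> - single v 1\<close> is harmless: where it truncates, the factor
  \<open>lookup \<alpha> v\<close> vanishes.\<close>
definition derivation :: "('v \<Rightarrow> ('v, 'a::comm_ring_1) mpoly) \<Rightarrow> ('v, 'a) mpoly \<Rightarrow> ('v, 'a) mpoly" where
  "derivation \<delta> f = (\<Sum>\<alpha>\<in>keys f. \<Sum>v\<in>keys \<alpha>.
      single (\<alpha> - single v 1) (lookup f \<alpha> * of_nat (lookup \<alpha> v)) * \<delta> v)"

lemma derivation_single:
  "derivation \<delta> (single \<alpha> c) = (\<Sum>v\<in>keys \<alpha>. single (\<alpha> - single v 1) (c * of_nat (lookup \<alpha> v)) * \<delta> v)"
  unfolding derivation_def by (rule sum_keys_single) simp

lemma derivation_single_superset: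
  assumes "finite K" "keys \<alpha> \<subseteq> K"
  shows "derivation \<delta> (single \<alpha> c) = (\<Sum>v\<in>K. single (\<alpha> - single v 1) (c * of_nat (lookup \<alpha> v)) * \<delta> v)"
  unfolding derivation_single
  by (rule sum.mono_neutral_left) (use assms in \<open>auto simp: in_keys_iff\<close>)

lemma derivation_add: "derivation \<delta> (f + g) = derivation \<delta> f + derivation \<delta> g"
  unfolding derivation_def
  by (rule setsum_keys_plus_distrib) (simp_all add: distrib_right single_add sum.distrib)

lemma derivation_zero [simp]: "derivation \<delta> 0 = 0"
  by (simp add: derivation_def)

lemma derivation_sum: "derivation \<delta> (sum f A) = (\<Sum>x\<in>A. derivation \<delta> (f x))"
  by (induction A rule: infinite_finite_induct) (auto simp: derivation_add)

lemma derivation_diff: "derivation \<delta> (f - g) = derivation \<delta> f - derivation \<delta> g"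
  by (metis add_diff_cancel derivation_add diff_add_cancel)

lemma derivation_uminus: "derivation \<delta> (- f) = - derivation \<delta> f"
  using derivation_diff[of \<delta> 0 f] by simp

lemma derivation_Const [simp]: "derivation \<delta> (Const c) = 0"
  by (simp add: derivation_single)

lemma derivation_one [simp]: "derivation \<delta> 1 = 0"
  using derivation_Const[of \<delta> 1] by simp

lemma derivation_of_int [simp]: "derivation \<delta> (of_int k) = 0"
  by (metis derivation_Const single_of_int)

lemma derivation_Var [simp]: "derivation \<delta> (Var v) = \<delta> v"
  by (simp add: Var_def derivation_single)

lemma derivation_scale_field: "derivation (\<lambda>v. c * \<delta> v) f = c * derivation \<delta> f"
  unfolding derivation_def by (simp add: sum_distrib_left mult.left_commute)

lemma derivation_zero_field [simp]: "derivation (\<lambda>v. 0) f = 0"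
  by (simp add: derivation_def)

lemma single_minus_var_mult:
  fixes a b :: "'a::comm_ring_1"
  shows "single (\<alpha> - single v 1) (a * of_nat (lookup \<alpha> v)) * single \<beta> b
     = single (\<alpha> + \<beta> - single v 1) (a * b * of_nat (lookup \<alpha> v))"
proof (cases "lookup \<alpha> v = 0")
  case False
  then have "\<alpha> - single v 1 + \<beta> = \<alpha> + \<beta> - single v 1"
    by (intro poly_mapping_eqI) (auto simp: lookup_add lookup_minus lookup_single when_def)
  then show ?thesis
    by (simp only: mult_single) (simp add: ac_simps)
qed simp

lemma derivation_mult_single:
  "derivation \<delta> (single \<alpha> a * single \<beta> b)
     = derivation \<delta> (single \<alpha> a) * single \<beta> b + single \<alpha> a * derivation \<delta> (single \<beta> b)"
proof -
  let ?K = "keys \<alpha> \<union> keys \<beta>"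
  have K: "finite ?K" "keys \<alpha> \<subseteq> ?K" "keys \<beta> \<subseteq> ?K" "keys (\<alpha> + \<beta>) \<subseteq> ?K"
    using keys_add[of \<alpha> \<beta>] by auto
  have left: "single (\<alpha> - single v 1) (a * of_nat (lookup \<alpha> v)) * \<delta> v * single \<beta> b
      = single (\<alpha> + \<beta> - single v 1) (a * b * of_nat (lookup \<alpha> v)) * \<delta> v" for v
  proof -
    have "single (\<alpha> - single v 1) (a * of_nat (lookup \<alpha> v)) * \<delta> v * single \<beta> b
        = (single (\<alpha> - single v 1) (a * of_nat (lookup \<alpha> v)) * single \<beta> b) * \<delta> v"
      by (simp add: ac_simps)
    then show ?thesis
      by (simp only: single_minus_var_mult)
  qed
  have right: "single \<alpha> a * (single (\<beta> - single v 1) (b * of_nat (lookup \<beta> v)) * \<delta> v)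
      = single (\<alpha> + \<beta> - single v 1) (a * b * of_nat (lookup \<beta> v)) * \<delta> v" for v
  proof -
    have "single \<alpha> a * (single (\<beta> - single v 1) (b * of_nat (lookup \<beta> v)) * \<delta> v)
        = (single (\<beta> - single v 1) (b * of_nat (lookup \<beta> v)) * single \<alpha> a) * \<delta> v"
      by (simp add: ac_simps)
    then show ?thesis
      by (simp only: single_minus_var_mult) (simp add: ac_simps)
  qed
  have "derivation \<delta> (single \<alpha> a) * single \<beta> b + single \<alpha> a * derivation \<delta> (single \<beta> b)
      = (\<Sum>v\<in>?K. single (\<alpha> - single v 1) (a * of_nat (lookup \<alpha> v)) * \<delta> v * single \<beta> b
          + single \<alpha> a * (single (\<beta> - single v 1) (b * of_nat (lookup \<beta> v)) * \<delta> v))"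
    unfolding derivation_single_superset[OF K(1) K(2)] derivation_single_superset[OF K(1) K(3)]
    by (simp only: sum_distrib_left sum_distrib_right sum.distrib)
  also have "\<dots> = (\<Sum>v\<in>?K. single (\<alpha> + \<beta> - single v 1) (a * b * of_nat (lookup (\<alpha> + \<beta>) v)) * \<delta> v)"
    by (simp only: left right lookup_add of_nat_add distrib_left single_add distrib_right)
  also have "\<dots> = derivation \<delta> (single \<alpha> a * single \<beta> b)"
    unfolding mult_single derivation_single_superset[OF K(1) K(4)] ..
  finally show ?thesis ..
qed

lemma derivation_mult: "derivation \<delta> (f * g) = derivation \<delta> f * g + f * derivation \<delta> g"
proof -
  have single_left: "derivation \<delta> (single \<alpha> a * g) = derivation \<delta> (single \<alpha> a) * g + single \<alpha> a * derivation \<delta> g"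
    for \<alpha> a
    by (subst (1 2 3) poly_mapping_eq_sum_single[of g])
      (simp add: sum_distrib_left sum_distrib_right derivation_sum derivation_mult_single sum.distrib)
  show ?thesis
    by (subst (1 2 3) poly_mapping_eq_sum_single[of f])
      (simp add: sum_distrib_left sum_distrib_right derivation_sum single_left sum.distrib)
qed

definition is_derivation :: "(('v, 'a::comm_ring_1) mpoly \<Rightarrow> ('v, 'a) mpoly) \<Rightarrow> bool" where
  "is_derivation D \<longleftrightarrow> (\<forall>f g. D (f + g) = D f + D g) \<and> (\<forall>f g. D (f * g) = D f * g + f * D g)
     \<and> (\<forall>c. D (Const c) = 0)"

lemma is_derivation_derivation: "is_derivation (derivation \<delta>)"
  unfolding is_derivation_def by (simp add: derivation_add derivation_mult)

lemma is_derivation_zero: "is_derivation D \<Longrightarrow> D 0 = 0"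
  unfolding is_derivation_def by (metis add_0 add_cancel_right_right)

lemma is_derivation_sum: "is_derivation D \<Longrightarrow> D (sum f A) = (\<Sum>x\<in>A. D (f x))"
  by (induction A rule: infinite_finite_induct) (auto simp: is_derivation_zero is_derivation_def)

lemma is_derivation_commutator:
  assumes "is_derivation D" "is_derivation E"
  shows "is_derivation (\<lambda>f. D (E f) - E (D f))"
  using assms is_derivation_zero[OF assms(1)] is_derivation_zero[OF assms(2)]
  unfolding is_derivation_def by (simp add: algebra_simps)

lemma is_derivation_unique:
  assumes D: "is_derivation D" and E: "is_derivation E" and Var: "\<And>v. D (Var v) = E (Var v)"
  shows "D f = E f"
proof -
  have single: "D (single \<alpha> c) = E (single \<alpha> c)" for \<alpha> c
  proof (induction "sum (lookup \<alpha>) (keys \<alpha>)" arbitrary: \<alpha> rule: less_induct)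
    case less
    show ?case
    proof (cases "\<alpha> = 0")
      case True
      then show ?thesis
        using D E unfolding is_derivation_def by simp
    next
      case False
      then obtain v where v: "v \<in> keys \<alpha>"
        by fastforce
      let ?\<beta> = "\<alpha> - single v 1"
      have "sum (lookup ?\<beta>) (keys ?\<beta>) = sum (lookup ?\<beta>) (keys \<alpha>)"
        by (rule sum.mono_neutral_left) (auto simp: in_keys_iff lookup_minus lookup_single when_def)
      also have "\<dots> < sum (lookup \<alpha>) (keys \<alpha>)"
        by (rule sum_strict_mono_ex1)
          (use v in \<open>auto simp: lookup_minus lookup_single when_def in_keys_iff\<close>)
      finally have "D (single ?\<beta> c) = E (single ?\<beta> c)"
        by (rule less)
      moreover have "single \<alpha> c = Var v * single ?\<beta> c"
        using v unfolding Var_def mult_single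
        by (intro arg_cong2[where f = single] poly_mapping_eqI)
          (auto simp: lookup_add lookup_minus lookup_single when_def in_keys_iff)
      ultimately show ?thesis
        using D E Var unfolding is_derivation_def by simp
    qed
  qed
  show ?thesis
    by (subst (1 2) poly_mapping_eq_sum_single[of f])
      (simp add: is_derivation_sum[OF D] is_derivation_sum[OF E] single)
qed

lemma derivation_commutator:
  "derivation \<delta> (derivation \<epsilon> f) - derivation \<epsilon> (derivation \<delta> f)
     = derivation (\<lambda>v. derivation \<delta> (\<epsilon> v) - derivation \<epsilon> (\<delta> v)) f"
  by (rule is_derivation_unique[OF is_derivation_commutator is_derivation_derivation])
    (simp_all add: is_derivation_derivation)

section \<open>Maps from \<open>W(\<phi>)\<close> to modules with a \<open>\<phi>\<close>-eigenvector\<close>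

locale phi_vector_rep =
  fixes phi :: "gb \<Rightarrow> complex"
    and rho :: "gb \<Rightarrow> ('v, complex) mpoly \<Rightarrow> ('v, complex) mpoly"
    and w :: "('v, complex) mpoly"
  assumes rho_add: "rho x (f + g) = rho x f + rho x g"
    and rho_Const: "rho x (Const c * f) = Const c * rho x f"
    and rho_bracket: "rho x (rho y f) - rho y (rho x f) = (\<Sum>k\<in>keys (br x y). Const (lookup (br x y) k) * rho k f)"
    and rho_eigen: "in_p p \<Longrightarrow> rho p w = Const (phi p) * w"

begin

lemma rho_zero [simp]: "rho x 0 = 0"
  by (metis add_cancel_right_right rho_add)

lemma foldr_rho_zero [simp]: "foldr rho u 0 = 0"
  by (induction u) auto

lemma foldr_rho_add: "foldr rho u (f + g) = foldr rho u f + foldr rho u g"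
  by (induction u) (auto simp: rho_add)

lemma foldr_rho_Const: "foldr rho u (Const c * f) = Const c * foldr rho u f"
  by (induction u) (auto simp: rho_Const)

lemma foldr_rho_sum: "foldr rho u (sum f A) = (\<Sum>i\<in>A. foldr rho u (f i))"
  by (induction A rule: infinite_finite_induct) (auto simp: foldr_rho_add)

lemma foldr_rho_diff: "foldr rho u (f - g) = foldr rho u f - foldr rho u g"
  by (metis add_diff_cancel diff_add_cancel foldr_rho_add)

lemma rho_sum: "rho x (sum f A) = (\<Sum>i\<in>A. rho x (f i))"
  using foldr_rho_sum[of "[x]"] by simp

definition W_map :: "tens \<Rightarrow> ('v, complex) mpoly" where
  "W_map t = (\<Sum>u\<in>keys t. Const (lookup t u) * foldr rho u w)"

lemma W_map_add: "W_map (a + b) = W_map a + W_map b"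
  unfolding W_map_def by (rule setsum_keys_plus_distrib) (simp_all add: single_add distrib_right)

lemma W_map_smul: "W_map (smul c t) = Const c * W_map t"
proof (cases "c = 0")
  case False
  then show ?thesis
    unfolding W_map_def keys_smul_nonzero[OF False]
    by (simp add: sum_distrib_left Const_mult mult.assoc)
qed (simp add: W_map_def)

lemma W_map_zero [simp]: "W_map 0 = 0"
  by (simp add: W_map_def)

lemma W_map_sum: "W_map (sum f A) = (\<Sum>i\<in>A. W_map (f i))"
  by (induction A rule: infinite_finite_induct) (auto simp: W_map_add)

lemma W_map_diff: "W_map (a - b) = W_map a - W_map b"
  by (metis W_map_add add_diff_cancel diff_add_cancel)

lemma W_map_wd [simp]: "W_map (wd u) = foldr rho u w"
  by (simp add: W_map_def wd_def)

lemma W_map_lmult: "W_map (lmult x t) = rho x (W_map t)"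
proof -
  have "W_map (lmult x t) = (\<Sum>u\<in>keys t. Const (lookup t u) * rho x (foldr rho u w))"
    unfolding lmult_eq_sum by (simp add: W_map_sum W_map_smul)
  also have "\<dots> = rho x (W_map t)"
    unfolding W_map_def by (simp add: rho_sum rho_Const)
  finally show ?thesis .
qed

lemma W_map_act: "W_map (act g t) = (\<Sum>k\<in>keys g. Const (lookup g k) * rho k (W_map t))"
  by (simp add: act_eq_sum_lmult W_map_sum W_map_smul W_map_lmult)

lemma W_map_Wker: "t \<in> Wker phi \<Longrightarrow> W_map t = 0"
proof -
  have "subspace_T {t. W_map t = 0}"
    unfolding subspace_T_def by (simp add: W_map_add W_map_smul)
  moreover have "W_map r = 0" if "r \<in> Wrels phi" for r
    using that unfolding Wrels_def
  proof (elim UnE CollectE exE conjE)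
    fix u v x y
    assume r: "r = wd (u @ [x, y] @ v) - wd (u @ [y, x] @ v) - ins u (br x y) v"
    have "W_map (ins u (br x y) v)
        = foldr rho u (\<Sum>k\<in>keys (br x y). Const (lookup (br x y) k) * rho k (foldr rho v w))"
      by (simp add: ins_def W_map_sum W_map_smul foldr_rho_sum foldr_rho_Const)
    then show "W_map r = 0"
      by (simp add: r W_map_diff foldr_rho_diff flip: rho_bracket)
  next
    fix u p
    assume "r = wd (u @ [p]) - smul (phi p) (wd u)" and "in_p p"
    then show "W_map r = 0"
      by (simp add: W_map_diff W_map_smul rho_eigen foldr_rho_Const)
  qed
  ultimately show "t \<in> Wker phi \<Longrightarrow> W_map t = 0"
    using Wker_minimal by blast
qed

lemma W_submodule_kernel: "W_submodule phi {t. W_map t = 0}"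
  unfolding W_submodule_def subspace_T_def
  by (auto simp: W_map_add W_map_smul W_map_act W_map_Wker)

end

section \<open>A polynomial model and the case \<open>|S\<^sup>\<phi>| \<le> 1\<close>\<close>

datatype var = Yv int | Zv int

definition L_field :: "int \<Rightarrow> var \<Rightarrow> (var, complex) mpoly" where
  "L_field n v = (case v of
      Yv i \<Rightarrow> of_int (n - i) * Var (Yv (i - n))
    | Zv i \<Rightarrow> of_int (n - i) * Var (Zv (i - n)))"

definition H_field :: "int \<Rightarrow> var \<Rightarrow> (var, complex) mpoly" where
  "H_field m v = (if v = Yv m then 1 else 0)"

text \<open>Forced by \<open>[L\<^sub>n, H\<^sub>m] = m H\<^sub>m\<^sub>+\<^sub>n\<close>: its derivative in \<open>Y\<^sub>m\<close> must be
  \<open>-m \<phi>(H\<^sub>m\<^sub>+\<^sub>n)\<close>.\<close>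
definition ell :: "(gb \<Rightarrow> complex) \<Rightarrow> int \<Rightarrow> (var, complex) mpoly" where
  "ell phi n = (\<Sum>s\<in>S_phi phi. of_int (n - s) * Const (phi (H s)) * Var (Yv (s - n)))"

fun model :: "(gb \<Rightarrow> complex) \<Rightarrow> gb \<Rightarrow> (var, complex) mpoly \<Rightarrow> (var, complex) mpoly" where
  "model phi (L n) f = derivation (L_field n) f + ell phi n * f"
| "model phi (H m) f = derivation (H_field m) f + Const (phi (H m)) * f"
| "model phi (I m) f = 0"
| "model phi (J m) f = 0"

lemma derivation_H_field [simp]: "derivation \<delta> (H_field m v) = 0"
  by (simp add: H_field_def)

lemma L_field_bracket:
  "derivation (L_field n) (L_field m v) - derivation (L_field m) (L_field n v) = of_int (m - n) * L_field (m + n) v"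
  by (cases v) (simp_all add: L_field_def derivation_mult derivation_diff algebra_simps)

lemma ell_bracket:
  "derivation (L_field n) (ell phi m) - derivation (L_field m) (ell phi n) = of_int (m - n) * ell phi (m + n)"
  unfolding ell_def derivation_sum sum_distrib_left sum_subtractf[symmetric]
  by (rule sum.cong[OF refl])
    (simp add: L_field_def derivation_mult derivation_diff algebra_simps)

lemma L_H_field_bracket:
  "derivation (L_field n) (H_field m v) - derivation (H_field m) (L_field n v) = of_int m * H_field (m + n) v"
  by (cases v) (auto simp: L_field_def H_field_def derivation_mult derivation_diff)

lemma H_field_ell:
  assumes "finite (S_phi phi)"
  shows "derivation (H_field m) (ell phi n) = - of_int m * Const (phi (H (m + n)))"
proof -
  have "derivation (H_field m) (ell phi n)
      = (\<Sum>s\<in>S_phi phi. if s = m + n then - of_int m * Const (phi (H (m + n))) else 0)"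
    unfolding ell_def derivation_sum
    by (rule sum.cong[OF refl]) (auto simp: derivation_mult derivation_diff derivation_uminus H_field_def)
  also have "\<dots> = - of_int m * Const (phi (H (m + n)))"
    using assms by (auto simp: S_phi_def)
  finally show ?thesis .
qed

lemma model_L_L:
  "model phi (L n) (model phi (L m) f) - model phi (L m) (model phi (L n) f)
     = of_int (m - n) * model phi (L (m + n)) f"
proof -
  have "model phi (L n) (model phi (L m) f) - model phi (L m) (model phi (L n) f)
      = (derivation (L_field n) (derivation (L_field m) f) - derivation (L_field m) (derivation (L_field n) f))
        + (derivation (L_field n) (ell phi m) - derivation (L_field m) (ell phi n)) * f"
    by (simp add: derivation_add derivation_mult algebra_simps)
  also have "\<dots> = of_int (m - n) * derivation (L_field (m + n)) f + of_int (m - n) * ell phi (m + n) * f"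
    by (simp only: derivation_commutator L_field_bracket derivation_scale_field ell_bracket)
  finally show ?thesis
    by (simp add: algebra_simps)
qed

lemma model_L_H:
  assumes "finite (S_phi phi)"
  shows "model phi (L n) (model phi (H m) f) - model phi (H m) (model phi (L n) f)
     = of_int m * model phi (H (m + n)) f"
proof -
  have "model phi (L n) (model phi (H m) f) - model phi (H m) (model phi (L n) f)
      = (derivation (L_field n) (derivation (H_field m) f) - derivation (H_field m) (derivation (L_field n) f))
        - derivation (H_field m) (ell phi n) * f"
    by (simp add: derivation_add derivation_mult algebra_simps)
  also have "\<dots> = of_int m * derivation (H_field (m + n)) f + of_int m * Const (phi (H (m + n))) * f"
    by (simp only: derivation_commutator L_H_field_bracket derivation_scale_field H_field_ell[OF assms])
      simp
  finally show ?thesis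
    by (simp add: algebra_simps)
qed

lemma model_H_H: "model phi (H m) (model phi (H k) f) - model phi (H k) (model phi (H m) f) = 0"
proof -
  have "model phi (H m) (model phi (H k) f) - model phi (H k) (model phi (H m) f)
      = derivation (H_field m) (derivation (H_field k) f) - derivation (H_field k) (derivation (H_field m) f)"
    by (simp add: derivation_add derivation_mult algebra_simps)
  also have "\<dots> = 0"
    unfolding derivation_commutator by (simp add: derivation_H_field)
  finally show ?thesis .
qed

lemma model_bracket:
  assumes S: "finite (S_phi phi)"
  shows "model phi x (model phi y f) - model phi y (model phi x f)
    = (\<Sum>k\<in>keys (br x y). Const (lookup (br x y) k) * model phi k f)"
proof -
  have bvec: "(\<Sum>k\<in>keys (bvec c b). Const (lookup (bvec c b) k) * model phi k f) = Const c * model phi b f"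
    for c b
    by (rule sum_keys_bvec) simp
  show ?thesis
  proof (cases x)
    case (L n)
    then show ?thesis
      using model_L_L model_L_H[OF S] by (cases y) (simp_all add: bvec single_diff)
  next
    case (H m)
    show ?thesis
    proof (cases y)
      case (L n)
      have "model phi (H m) (model phi (L n) f) - model phi (L n) (model phi (H m) f)
          = - (of_int m * model phi (H (m + n)) f)"
        using model_L_H[OF S, of n m f] by (metis minus_diff_eq)
      with \<open>x = H m\<close> L show ?thesis
        by (simp add: bvec single_uminus del: model.simps)
    next
      case (H k)
      with \<open>x = H m\<close> show ?thesis
        using model_H_H[of phi m k f] by (simp del: model.simps)
    qed (simp_all add: \<open>x = H m\<close> bvec)
  qed (cases y; simp add: bvec)+
qed

lemma model_phi_vector_rep:
  assumes S: "finite (S_phi phi)" and IJ: "\<And>n. phi (I n) = 0" "\<And>n. phi (J n) = 0"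
    and w: "\<And>m. derivation (H_field m) w = 0"
  shows "phi_vector_rep phi (model phi) w"
proof
  fix x f g
  show "model phi x (f + g) = model phi x f + model phi x g"
    by (cases x) (simp_all add: derivation_add algebra_simps)
next
  fix x c f
  show "model phi x (Const c * f) = Const c * model phi x f"
    by (cases x) (simp_all add: derivation_mult algebra_simps)
next
  fix x y f
  show "model phi x (model phi y f) - model phi y (model phi x f)
      = (\<Sum>k\<in>keys (br x y). Const (lookup (br x y) k) * model phi k f)"
    by (rule model_bracket[OF S])
next
  fix p
  assume "in_p p"
  then show "model phi p w = Const (phi p) * w"
    using IJ w by (cases p) auto
qed

lemma lin_bvec: "lin phi (bvec c b) = c * phi b"
  unfolding lin_def by (rule sum_keys_bvec) simp

lemma phi_I_J_zero:
  assumes "lie_hom_p phi"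
  shows "phi (I n) = 0" "phi (J n) = 0"
proof -
  have "lin phi (br (H 0) (I n)) = 0" "lin phi (br (H 0) (J n)) = 0"
    using assms unfolding lie_hom_p_def by (simp_all del: br.simps)
  then show "phi (I n) = 0" "phi (J n) = 0"
    by (simp_all add: lin_bvec)
qed

lemma Wker_ne_UNIV:
  assumes "finite (S_phi phi)" "\<And>n. phi (I n) = 0" "\<And>n. phi (J n) = 0"
  shows "wd [] \<notin> Wker phi"
proof -
  interpret phi_vector_rep phi "model phi" 1
    by (rule model_phi_vector_rep[OF assms]) simp
  show ?thesis
    using W_map_Wker[of "wd []"] by auto
qed

lemma not_W_irreducible_if_S_phi_subset_singleton:
  assumes S: "finite (S_phi phi)" and IJ: "\<And>n. phi (I n) = 0" "\<And>n. phi (J n) = 0"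
    and k: "S_phi phi \<subseteq> {k}"
  shows "\<not> W_irreducible phi"
proof
  interpret one: phi_vector_rep phi "model phi" 1
    by (rule model_phi_vector_rep[OF S IJ]) simp
  interpret var: phi_vector_rep phi "model phi" "Var (Zv (k + 1))"
    by (rule model_phi_vector_rep[OF S IJ]) (simp add: H_field_def)
  have "ell phi k = 0"
    unfolding ell_def using k by (intro sum.neutral) auto
  then have "var.W_map (wd [L k]) = - Var (Zv 1)"
    by (simp add: L_field_def)
  then have "wd [L k] \<notin> Wker phi"
    using var.W_map_Wker Var_nonzero by force
  moreover have "wd [L k] \<in> {t. one.W_map t = 0}"
    using \<open>ell phi k = 0\<close> by simp
  moreover have "wd [] \<notin> {t. one.W_map t = 0}"
    by simp
  moreover assume "W_irreducible phi"
  ultimately show False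
    using one.W_submodule_kernel unfolding W_irreducible_iff_submodules by blast
qed

lemma W_irreducible_if_two_le_card:
  assumes "finite (S_phi phi)" "2 \<le> card (S_phi phi)" "\<And>n. phi (I n) = 0" "\<And>n. phi (J n) = 0"
  shows "W_irreducible phi"
  unfolding W_irreducible_iff_submodules
  using Wker_ne_UNIV[OF assms(1,3,4)] W_submodule_eq_UNIV[OF _ assms(1,2)] by blast

theorem theorem4p5:
  fixes phi :: "gb \<Rightarrow> complex"
  assumes "lie_hom_p phi"
    and "finite (S_phi phi)"
  shows "W_irreducible phi \<longleftrightarrow> card (S_phi phi) \<ge> 2"
proof
  note IJ = phi_I_J_zero[OF assms(1)]
  show "W_irreducible phi \<Longrightarrow> 2 \<le> card (S_phi phi)"
  proof (rule ccontr)
    assume "\<not> 2 \<le> card (S_phi phi)"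
    then have "\<forall>a\<in>S_phi phi. \<forall>b\<in>S_phi phi. a = b"
      using card_le_Suc0_iff_eq[OF assms(2)] by simp
    then obtain k where "S_phi phi \<subseteq> {k}"
      by blast
    moreover assume "W_irreducible phi"
    ultimately show False
      using not_W_irreducible_if_S_phi_subset_singleton[OF assms(2) IJ] by blast
  qed
  show "2 \<le> card (S_phi phi) \<Longrightarrow> W_irreducible phi"
    using W_irreducible_if_two_le_card[OF assms(2) _ IJ] by blast
qed

end
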